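(* Let $N\ge3$ and $p>p_{\rm S}$. The problem $$y''+\alpha y'-y+y^p+B_0(t)y^p+B_1(t)y=0,\qquad y(t)\to1\ \text{as }t\to-\infty,$$ has a solution defined on $(-\infty,T]$ for some $T\in\mathbb{R}$, and this solution is unique near $t=-\infty$ (any two such solutions coincide on some interval $(-\infty,T']$).
   Context: $p_{\rm S}=\frac{N+2}{N-2}$, $\mu=\frac{2}{p-1}$, $a=\{\mu(N-2-\mu)\}^{\mu/2}$, $m=a^{-(p-1)/2}$, $\alpha=m(N-2-2\mu)$, $q=\frac{N-2}{2}(p-p_{\rm S})$, $B_0(t)=(1+e^{2mt})^q-1$, $B_1(t)=\frac{N(N-2)e^{2mt}}{(1+e^{2mt})^2}$. *)

theory Defs
  imports "HOL-Analysis.Analysis"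
begin

definition pS :: "nat \<Rightarrow> real" where
  "pS N = (real N + 2) / (real N - 2)"

definition mu :: "real \<Rightarrow> real" where
  "mu p = 2 / (p - 1)"

definition aconst :: "nat \<Rightarrow> real \<Rightarrow> real" where
  "aconst N p = (mu p * (real N - 2 - mu p)) powr (mu p / 2)"

definition mconst :: "nat \<Rightarrow> real \<Rightarrow> real" where
  "mconst N p = aconst N p powr (- (p - 1) / 2)"

definition alpha :: "nat \<Rightarrow> real \<Rightarrow> real" where
  "alpha N p = mconst N p * (real N - 2 - 2 * mu p)"

definition qconst :: "nat \<Rightarrow> real \<Rightarrow> real" where
  "qconst N p = (real N - 2) / 2 * (p - pS N)"

definition B0 :: "nat \<Rightarrow> real \<Rightarrow> real \<Rightarrow> real" where
  "B0 N p t = (1 + exp (2 * mconst N p * t)) powr (qconst N p) - 1"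

definition B1 :: "nat \<Rightarrow> real \<Rightarrow> real \<Rightarrow> real" where
  "B1 N p t = real N * (real N - 2) * exp (2 * mconst N p * t)
              / (1 + exp (2 * mconst N p * t))\<^sup>2"

definition is_sol :: "nat \<Rightarrow> real \<Rightarrow> real \<Rightarrow> (real \<Rightarrow> real) \<Rightarrow> (real \<Rightarrow> real) \<Rightarrow> bool" where
  "is_sol N p T y y' \<longleftrightarrow>
     (\<forall>t\<le>T. (y has_real_derivative y' t) (at t within {..T}) \<and>
        (y' has_real_derivative
            (- alpha N p * y' t + y t - y t powr p - B0 N p t * y t powr p - B1 N p t * y t))
          (at t within {..T})) \<and>
     (y \<longlongrightarrow> 1) at_bot"

end

theory Submission
  imports Defs "HOL-Real_Asymp.Real_Asymp"
begin

text \<open>Uniqueness: the difference \<open>w\<close> of two solutions satisfies \<open>w'' + alpha w' + (p - 1) w = r\<close>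
  with \<open>|r| \<le> e |w|\<close> near \<open>-\<infinity>\<close>, because \<open>u - u\<^sup>p\<close> is linear to first order at \<open>u = 1\<close> and
  \<open>B0, B1 \<rightarrow> 0\<close>. Solutions have bounded derivatives there, so a Lyapunov function of the damped
  oscillator is bounded on \<open>(-\<infinity>, t0]\<close> and decays at a fixed exponential rate forward in time;
  both together force \<open>w = 0\<close>.

  Existence: \<open>z = y - 1\<close> solves \<open>z'' + alpha z' + (p - 1) z = G t z\<close> with \<open>G\<close> small and of small
  Lipschitz constant near \<open>t = -\<infinity>, z = 0\<close>. Splitting \<open>X\<^sup>2 + alpha X + (p - 1)\<close> into two factors with
  roots of negative real part and solving each first order equation by variation of constants from
  \<open>-\<infinity>\<close> turns the problem into a contraction on bounded continuous functions, whose fixed point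
  tends to \<open>0\<close> at \<open>-\<infinity>\<close>.\<close>

lemma supercritical_constants:
  fixes N :: nat and p :: real
  assumes N: "N \<ge> 3" and p: "p > pS N"
  shows "p > 1" "mconst N p > 0" "alpha N p > 0"
proof -
  have N2: "real N - 2 \<ge> 1" using N by simp
  have "p - 1 > 4 / (real N - 2)"
    using p N2 unfolding pS_def by (simp add: field_simps)
  then have p4: "(p - 1) * (real N - 2) > 4" using N2 by (simp add: field_simps)
  then show p1: "p > 1" using N2 by (smt (verit) mult_nonpos_nonneg)
  have mu: "mu p > 0" unfolding mu_def using p1 by simp
  have gap: "real N - 2 - 2 * mu p > 0"
    using p4 p1 unfolding mu_def by (simp add: field_simps)
  then have "aconst N p > 0" unfolding aconst_def using mu by simp
  then show m: "mconst N p > 0" unfolding mconst_def by simp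
  show "alpha N p > 0" unfolding alpha_def using m gap by simp
qed

lemma B0_tendsto_at_bot: "mconst N p > 0 \<Longrightarrow> (B0 N p \<longlongrightarrow> 0) at_bot"
  unfolding B0_def[abs_def] by real_asymp

lemma B1_tendsto_at_bot: "mconst N p > 0 \<Longrightarrow> (B1 N p \<longlongrightarrow> 0) at_bot"
  unfolding B1_def[abs_def] by real_asymp

lemma continuous_on_B0: "continuous_on UNIV (B0 N p)"
  unfolding B0_def[abs_def] by (intro continuous_intros) (smt (verit) exp_gt_zero)

lemma continuous_on_B1: "continuous_on UNIV (B1 N p)"
  unfolding B1_def[abs_def] by (intro continuous_intros) (smt (verit) exp_gt_zero power_eq_0_iff)

lemma tendsto_at_bot_imp_abs_le:
  fixes f :: "real \<Rightarrow> real"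
  assumes "(f \<longlongrightarrow> c) at_bot" and "e > 0"
  shows "\<exists>T. \<forall>t\<le>T. \<bar>f t - c\<bar> \<le> e"
proof -
  have "\<forall>\<^sub>F t in at_bot. dist (f t) c < e" using tendstoD[OF assms] .
  then show ?thesis
    unfolding eventually_at_bot_linorder dist_real_def by (auto intro: less_imp_le)
qed

lemma powr_linearization_near_1:
  fixes p e :: real
  assumes "e > 0"
  shows "\<exists>d>0. d \<le> 1/2 \<and> (\<forall>a b. \<bar>a - 1\<bar> \<le> d \<longrightarrow> \<bar>b - 1\<bar> \<le> d \<longrightarrow>
            \<bar>a powr p - b powr p - p * (a - b)\<bar> \<le> e * \<bar>a - b\<bar>)"
proof -
  have "continuous (at 1) (\<lambda>x::real. p * x powr (p - 1))"
    by (intro continuous_intros) auto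
  then obtain s where s: "s > 0" "\<And>x. dist x 1 < s \<Longrightarrow> \<bar>p * x powr (p - 1) - p\<bar> < e"
    using assms unfolding continuous_at_eps_delta dist_real_def by force
  define d where "d = min (s/2) (1/2)"
  have d: "d > 0" "d \<le> 1/2" using s unfolding d_def by auto
  have ordered: "\<bar>b powr p - a powr p - p * (b - a)\<bar> \<le> e * \<bar>b - a\<bar>"
    if a: "\<bar>a - 1\<bar> \<le> d" and b: "\<bar>b - 1\<bar> \<le> d" and ab: "a < b" for a b
  proof -
    have "DERIV (\<lambda>x. x powr p - p * x) x :> p * x powr (p - 1) - p" if "a \<le> x" "x \<le> b" for x
      using that a d by (auto intro!: derivative_eq_intros)
    from MVT2[OF ab this] obtain z where z: "a < z" "z < b"
      and mvt: "(b powr p - p * b) - (a powr p - p * a) = (b - a) * (p * z powr (p - 1) - p)"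
      by blast
    have "- (s/2) \<le> a - 1" "b - 1 \<le> s/2" using a b unfolding d_def by arith+
    then have "dist z 1 < s" unfolding dist_real_def abs_less_iff using z s by linarith
    then have "\<bar>p * z powr (p - 1) - p\<bar> \<le> e" using s(2) by (simp add: less_imp_le)
    then have "\<bar>b - a\<bar> * \<bar>p * z powr (p - 1) - p\<bar> \<le> \<bar>b - a\<bar> * e"
      by (intro mult_left_mono) auto
    moreover have "b powr p - a powr p - p * (b - a) = (b - a) * (p * z powr (p - 1) - p)"
      using mvt by (simp add: algebra_simps)
    ultimately show ?thesis by (simp add: abs_mult mult.commute)
  qed
  have "\<bar>a powr p - b powr p - p * (a - b)\<bar> \<le> e * \<bar>a - b\<bar>"
    if "\<bar>a - 1\<bar> \<le> d" "\<bar>b - 1\<bar> \<le> d" for a b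
    using ordered[of a b] ordered[of b a] that
    by (cases a b rule: linorder_cases) (auto simp: abs_minus_commute algebra_simps)
  with d show ?thesis by blast
qed

definition nonlin :: "nat \<Rightarrow> real \<Rightarrow> real \<Rightarrow> real \<Rightarrow> real" where
  "nonlin N p t u = u - u powr p - B0 N p t * u powr p - B1 N p t * u"

lemma is_sol_iff_nonlin:
  "is_sol N p T y y' \<longleftrightarrow>
     (\<forall>t\<le>T. (y has_real_derivative y' t) (at t within {..T}) \<and>
        (y' has_real_derivative - alpha N p * y' t + nonlin N p t (y t)) (at t within {..T})) \<and>
     (y \<longlongrightarrow> 1) at_bot"
  unfolding is_sol_def nonlin_def by (simp add: algebra_simps)

lemma is_solD:
  assumes "is_sol N p T y y'" and "t < T"
  shows "(y has_real_derivative y' t) (at t)"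
    and "(y' has_real_derivative - alpha N p * y' t + nonlin N p t (y t)) (at t)"
proof -
  have "t \<in> interior {..T}"
    using assms(2) interior_maximal[of "{..<T}" "{..T}"] by auto
  then have at: "at t within {..T} = at t" by (rule at_within_interior)
  have "(y has_real_derivative y' t) (at t within {..T}) \<and>
      (y' has_real_derivative - alpha N p * y' t + nonlin N p t (y t)) (at t within {..T})"
    using assms(1) assms(2)[THEN less_imp_le] unfolding is_sol_iff_nonlin by blast
  then show "(y has_real_derivative y' t) (at t)"
    "(y' has_real_derivative - alpha N p * y' t + nonlin N p t (y t)) (at t)"
    unfolding at by blast+
qed

lemma nonlin_at_1: "nonlin N p t 1 = - (B0 N p t + B1 N p t)"
  by (simp add: nonlin_def)

lemma nonlin_linearization:
  assumes N: "N \<ge> 3" and p: "p > pS N" and e: "e > 0"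
  shows "\<exists>d>0. d \<le> 1/2 \<and> (\<exists>T. \<forall>t\<le>T. \<forall>a b. \<bar>a - 1\<bar> \<le> d \<longrightarrow> \<bar>b - 1\<bar> \<le> d \<longrightarrow>
           \<bar>nonlin N p t a - nonlin N p t b + (p - 1) * (a - b)\<bar> \<le> e * \<bar>a - b\<bar>)"
proof -
  define e1 where "e1 = e / 3"
  have e1: "e1 > 0" using e unfolding e1_def by simp
  have p1: "p > 1" and m: "mconst N p > 0" using supercritical_constants[OF N p] by auto
  obtain d where d: "d > 0" "d \<le> 1/2" and lin: "\<And>a b. \<bar>a - 1\<bar> \<le> d \<Longrightarrow> \<bar>b - 1\<bar> \<le> d \<Longrightarrow>
      \<bar>a powr p - b powr p - p * (a - b)\<bar> \<le> e1 * \<bar>a - b\<bar>"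
    using powr_linearization_near_1[OF e1] by blast
  obtain T0 where T0: "\<And>t. t \<le> T0 \<Longrightarrow> \<bar>B0 N p t\<bar> \<le> e1 / (p + e1)"
    using tendsto_at_bot_imp_abs_le[OF B0_tendsto_at_bot[OF m], of "e1 / (p + e1)"] e1 p1 by auto
  obtain T1 where T1: "\<And>t. t \<le> T1 \<Longrightarrow> \<bar>B1 N p t\<bar> \<le> e1"
    using tendsto_at_bot_imp_abs_le[OF B1_tendsto_at_bot[OF m] e1] by auto
  have "\<bar>nonlin N p t a - nonlin N p t b + (p - 1) * (a - b)\<bar> \<le> e * \<bar>a - b\<bar>"
    if t: "t \<le> min T0 T1" and a: "\<bar>a - 1\<bar> \<le> d" and b: "\<bar>b - 1\<bar> \<le> d" for t a b
  proof -
    define D where "D = a powr p - b powr p"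
    have lin_D: "\<bar>D - p * (a - b)\<bar> \<le> e1 * \<bar>a - b\<bar>" using lin[OF a b] unfolding D_def .
    have "\<bar>p * (a - b)\<bar> = p * \<bar>a - b\<bar>" using p1 by (simp add: abs_mult)
    then have "\<bar>D\<bar> \<le> (p + e1) * \<bar>a - b\<bar>"
      using lin_D by (simp add: distrib_right)
    then have "\<bar>B0 N p t\<bar> * \<bar>D\<bar> \<le> e1 / (p + e1) * ((p + e1) * \<bar>a - b\<bar>)"
      using T0[of t] t by (intro mult_mono) auto
    then have B0_D: "\<bar>B0 N p t * D\<bar> \<le> e1 * \<bar>a - b\<bar>"
      using p1 e1 by (simp add: abs_mult)
    have B1_ab: "\<bar>B1 N p t * (a - b)\<bar> \<le> e1 * \<bar>a - b\<bar>"
      using T1[of t] t by (simp add: abs_mult mult_right_mono)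
    have "nonlin N p t a - nonlin N p t b + (p - 1) * (a - b)
        = - (D - p * (a - b)) - B0 N p t * D - B1 N p t * (a - b)"
      unfolding nonlin_def D_def by (simp add: algebra_simps)
    then show ?thesis using lin_D B0_D B1_ab unfolding e1_def by linarith
  qed
  with d show ?thesis by blast
qed

text \<open>If \<open>y'\<close> exceeded \<open>H / a\<close> somewhere, the equation would keep \<open>y'\<close> above that level
  at every earlier time, and \<open>y\<close> could not stay bounded towards \<open>-\<infinity>\<close>.\<close>
lemma bounded_damped_solution_derivative_le:
  fixes y y' h :: "real \<Rightarrow> real"
  assumes a: "a > 0" and s: "s \<le> t1"
    and y: "\<And>x. x \<le> t1 \<Longrightarrow> (y has_real_derivative y' x) (at x)"
    and y': "\<And>x. x \<le> t1 \<Longrightarrow> (y' has_real_derivative - a * y' x + h x) (at x)"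
    and h: "\<And>x. x \<le> t1 \<Longrightarrow> h x \<le> H" and H: "H \<ge> 0"
    and bdd: "\<And>x. x \<le> t1 \<Longrightarrow> \<bar>y x\<bar> \<le> M"
  shows "y' s \<le> H / a"
proof (rule ccontr)
  define c where "c = H / a"
  define \<delta> where "\<delta> = y' s - c"
  assume "\<not> y' s \<le> H / a"
  then have \<delta>: "\<delta> > 0" unfolding \<delta>_def c_def by simp
  have c: "c \<ge> 0" unfolding c_def using a H by simp
  have y'_above: "y' r \<ge> c + \<delta>" if r: "r \<le> s" for r
  proof -
    have "exp (a * s) * (y' s - c) \<le> exp (a * r) * (y' r - c)"
    proof (rule DERIV_nonpos_imp_nonincreasing[OF r, of "\<lambda>x. exp (a * x) * (y' x - c)"])
      fix x assume "r \<le> x" "x \<le> s"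
      then have x: "x \<le> t1" using s by simp
      have "((\<lambda>x. exp (a * x) * (y' x - c)) has_real_derivative
            a * exp (a * x) * (y' x - c) + exp (a * x) * (- a * y' x + h x)) (at x)"
        by (auto intro!: derivative_eq_intros y'[OF x])
      moreover have "a * exp (a * x) * (y' x - c) + exp (a * x) * (- a * y' x + h x)
          = exp (a * x) * (h x - H)" using a unfolding c_def by (simp add: algebra_simps)
      moreover have "exp (a * x) * (h x - H) \<le> 0" using h[OF x] by (simp add: mult_nonneg_nonpos)
      ultimately show "\<exists>D. ((\<lambda>x. exp (a * x) * (y' x - c)) has_real_derivative D) (at x) \<and> D \<le> 0"
        by auto
    qed
    moreover have "exp (a * r) * \<delta> \<le> exp (a * s) * \<delta>" using r a \<delta> by simp
    ultimately have "exp (a * r) * \<delta> \<le> exp (a * r) * (y' r - c)" unfolding \<delta>_def by linarith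
    then show ?thesis by simp
  qed
  define r where "r = s - (2 * M + 1) / \<delta>"
  have rs: "r \<le> s" unfolding r_def using \<delta> bdd[OF s] by simp
  have "y r - \<delta> * r \<le> y s - \<delta> * s"
  proof (rule DERIV_nonneg_imp_nondecreasing[OF rs, of "\<lambda>x. y x - \<delta> * x"])
    fix x assume x: "r \<le> x" "x \<le> s"
    have "((\<lambda>x. y x - \<delta> * x) has_real_derivative y' x - \<delta>) (at x)"
      using x s by (auto intro!: derivative_eq_intros y)
    moreover have "y' x - \<delta> \<ge> 0" using y'_above[of x] x c by simp
    ultimately show "\<exists>D. ((\<lambda>x. y x - \<delta> * x) has_real_derivative D) (at x) \<and> D \<ge> 0" by auto
  qed
  moreover have "\<delta> * (s - r) = 2 * M + 1" unfolding r_def using \<delta> by simp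
  moreover have "\<bar>y r\<bar> \<le> M" "\<bar>y s\<bar> \<le> M" using bdd rs s by auto
  ultimately show False by (simp add: algebra_simps)
qed

lemma bounded_damped_solution_abs_derivative_le:
  fixes y y' h :: "real \<Rightarrow> real"
  assumes a: "a > 0" and s: "s \<le> t1"
    and y: "\<And>x. x \<le> t1 \<Longrightarrow> (y has_real_derivative y' x) (at x)"
    and y': "\<And>x. x \<le> t1 \<Longrightarrow> (y' has_real_derivative - a * y' x + h x) (at x)"
    and h: "\<And>x. x \<le> t1 \<Longrightarrow> \<bar>h x\<bar> \<le> H"
    and bdd: "\<And>x. x \<le> t1 \<Longrightarrow> \<bar>y x\<bar> \<le> M"
  shows "\<bar>y' s\<bar> \<le> H / a"
proof -
  have H: "H \<ge> 0" using h[of t1] by simp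
  have "y' s \<le> H / a"
    using bounded_damped_solution_derivative_le[OF a s y y' _ H bdd] h by (auto simp: abs_le_iff)
  moreover have "- y' s \<le> H / a"
  proof (rule bounded_damped_solution_derivative_le[OF a s, where h = "\<lambda>x. - h x" and y = "\<lambda>x. - y x"])
    show "((\<lambda>x. - y x) has_real_derivative - y' x) (at x)" if "x \<le> t1" for x
      using y[OF that] by (rule derivative_intros)
    show "((\<lambda>x. - y' x) has_real_derivative - a * - y' x + - h x) (at x)" if "x \<le> t1" for x
      using DERIV_minus[OF y'[OF that]] by simp
  qed (use h H bdd in \<open>auto simp: abs_le_iff\<close>)
  ultimately show ?thesis by simp
qed

text \<open>A Lyapunov function for \<open>w'' + a w' + k w = 0\<close>, with \<open>v = w'\<close>.\<close>
definition oscillator_energy :: "real \<Rightarrow> real \<Rightarrow> real \<Rightarrow> real \<Rightarrow> real" where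
  "oscillator_energy a k w v = v\<^sup>2 + a * w * v + (a\<^sup>2 / 2 + k) * w\<^sup>2"

lemma oscillator_energy_ge: "k * w\<^sup>2 \<le> oscillator_energy a k w v"
proof -
  have "oscillator_energy a k w v = (v + a * w / 2)\<^sup>2 + (a\<^sup>2 / 4) * w\<^sup>2 + k * w\<^sup>2"
    unfolding oscillator_energy_def by (simp add: algebra_simps power2_eq_square)
  moreover have "0 \<le> (a\<^sup>2 / 4) * w\<^sup>2" by simp
  ultimately show ?thesis using zero_le_power2[of "v + a * w / 2"] by linarith
qed

lemma oscillator_energy_le:
  assumes "a \<ge> 0" "k \<ge> 0"
  shows "oscillator_energy a k w v \<le> (1 + a + a\<^sup>2 / 2 + k) * (v\<^sup>2 + w\<^sup>2)"
proof -
  have "2 * w * v \<le> w\<^sup>2 + v\<^sup>2" by (rule sum_squares_bound)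
  then have "w * v \<le> v\<^sup>2 + w\<^sup>2" using zero_le_power2[of v] zero_le_power2[of w] by linarith
  then have "a * w * v \<le> a * (v\<^sup>2 + w\<^sup>2)"
    using mult_left_mono[OF _ assms(1)] by (simp add: mult.assoc)
  moreover have "0 \<le> (a\<^sup>2 / 2 + k) * v\<^sup>2" using assms by simp
  moreover have "(1 + a + a\<^sup>2 / 2 + k) * (v\<^sup>2 + w\<^sup>2)
      = v\<^sup>2 + a * (v\<^sup>2 + w\<^sup>2) + (a\<^sup>2 / 2 + k) * w\<^sup>2 + ((a\<^sup>2 / 2 + k) * v\<^sup>2 + w\<^sup>2)"
    by (simp add: algebra_simps)
  ultimately show ?thesis using zero_le_power2[of w] unfolding oscillator_energy_def by linarith
qed

text \<open>The right-hand side below is the derivative of the energy along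
  \<open>w' = v, v' = - a v - k w + r\<close>; a perturbation \<open>r\<close> of relative size \<open>e\<close> still leaves
  exponential decay at the rate \<open>\<rho>\<close>.\<close>
lemma oscillator_energy_dissipation:
  fixes a k e w v r :: real
  assumes a: "a > 0" and k: "k > 0" and e: "e \<ge> 0" "e \<le> a / 2" "e * (1 + a) \<le> a * k / 2"
    and r: "\<bar>r\<bar> \<le> e * \<bar>w\<bar>"
  defines "\<rho> \<equiv> min (a / 2) (a * k / 2) / (1 + a + a\<^sup>2 / 2 + k)"
  shows "\<rho> * oscillator_energy a k w v + (- a * v\<^sup>2 - a * k * w\<^sup>2 + (2 * v + a * w) * r) \<le> 0"
proof -
  define K where "K = 1 + a + a\<^sup>2 / 2 + k"
  have K: "K > 0" unfolding K_def using a k by (simp add: add_pos_nonneg)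
  have "(2 * v + a * w) * r \<le> \<bar>2 * v + a * w\<bar> * \<bar>r\<bar>" by (metis abs_ge_self abs_mult)
  also have "\<dots> \<le> (2 * \<bar>v\<bar> + a * \<bar>w\<bar>) * (e * \<bar>w\<bar>)"
    using r a by (intro mult_mono) (auto simp: abs_mult intro: order_trans[OF abs_triangle_ineq])
  also have "\<dots> = e * (2 * \<bar>v\<bar> * \<bar>w\<bar> + a * w\<^sup>2)" by (simp add: algebra_simps power2_eq_square)
  also have "\<dots> \<le> e * (v\<^sup>2 + w\<^sup>2 + a * w\<^sup>2)"
    using sum_squares_bound[of "\<bar>v\<bar>" "\<bar>w\<bar>"] e by (intro mult_left_mono) auto
  also have "\<dots> \<le> (a / 2) * v\<^sup>2 + (a * k / 2) * w\<^sup>2"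
    using e mult_right_mono[of e "a/2" "v\<^sup>2"] mult_right_mono[of "e * (1 + a)" "a * k / 2" "w\<^sup>2"]
    by (simp add: algebra_simps)
  finally have perturbation: "(2 * v + a * w) * r \<le> (a / 2) * v\<^sup>2 + (a * k / 2) * w\<^sup>2" .
  have "\<rho> * oscillator_energy a k w v \<le> \<rho> * (K * (v\<^sup>2 + w\<^sup>2))"
    using oscillator_energy_le[of a k w v] a k K unfolding \<rho>_def K_def[symmetric]
    by (intro mult_left_mono) auto
  also have "\<dots> = min (a / 2) (a * k / 2) * (v\<^sup>2 + w\<^sup>2)" unfolding \<rho>_def K_def[symmetric] using K by simp
  also have "\<dots> = min (a / 2) (a * k / 2) * v\<^sup>2 + min (a / 2) (a * k / 2) * w\<^sup>2"
    by (simp add: distrib_left)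
  also have "\<dots> \<le> (a / 2) * v\<^sup>2 + (a * k / 2) * w\<^sup>2"
    by (intro add_mono mult_right_mono) auto
  finally show ?thesis using perturbation by (simp add: algebra_simps)
qed

lemma bounded_perturbed_oscillator_vanishes:
  fixes w v r :: "real \<Rightarrow> real"
  assumes a: "a > 0" and k: "k > 0" and e: "e \<ge> 0" "e \<le> a / 2" "e * (1 + a) \<le> a * k / 2"
    and w: "\<And>x. x \<le> t0 \<Longrightarrow> (w has_real_derivative v x) (at x)"
    and v: "\<And>x. x \<le> t0 \<Longrightarrow> (v has_real_derivative - a * v x - k * w x + r x) (at x)"
    and r: "\<And>x. x \<le> t0 \<Longrightarrow> \<bar>r x\<bar> \<le> e * \<bar>w x\<bar>"
    and bdd: "\<And>x. x \<le> t0 \<Longrightarrow> \<bar>w x\<bar> \<le> M \<and> \<bar>v x\<bar> \<le> M"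
    and t: "t \<le> t0"
  shows "w t = 0"
proof (rule ccontr)
  assume "w t \<noteq> 0"
  define E where "E x = oscillator_energy a k (w x) (v x)" for x
  define \<rho> where "\<rho> = min (a / 2) (a * k / 2) / (1 + a + a\<^sup>2 / 2 + k)"
  define B where "B = (1 + a + a\<^sup>2 / 2 + k) * (M\<^sup>2 + M\<^sup>2)"
  have \<rho>: "\<rho> > 0" unfolding \<rho>_def using a k by (simp add: add_pos_nonneg)
  have E_le: "E x \<le> B" if "x \<le> t0" for x
  proof -
    have "(v x)\<^sup>2 \<le> M\<^sup>2" "(w x)\<^sup>2 \<le> M\<^sup>2"
      using bdd[OF that] power_mono[of "\<bar>v x\<bar>" M 2] power_mono[of "\<bar>w x\<bar>" M 2] by simp_all
    then have "(1 + a + a\<^sup>2 / 2 + k) * ((v x)\<^sup>2 + (w x)\<^sup>2) \<le> B"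
      unfolding B_def using a k by (intro mult_left_mono add_mono) auto
    with oscillator_energy_le[of a k "w x" "v x"] a k show ?thesis unfolding E_def by simp
  qed
  have "k * (w t)\<^sup>2 > 0" using \<open>w t \<noteq> 0\<close> k by simp
  then have Et: "E t > 0"
    using oscillator_energy_ge[of k "w t" a "v t"] unfolding E_def by linarith
  then have B: "B > 0" using E_le[OF t] by simp
  have decay: "exp (\<rho> * t) * E t \<le> exp (\<rho> * s) * E s" if s: "s \<le> t" for s
  proof (rule DERIV_nonpos_imp_nonincreasing[OF s, of "\<lambda>x. exp (\<rho> * x) * E x"])
    fix x assume "s \<le> x" "x \<le> t"
    then have x: "x \<le> t0" using t by simp
    have "(E has_real_derivative - a * (v x)\<^sup>2 - a * k * (w x)\<^sup>2 + (2 * v x + a * w x) * r x) (at x)"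
      unfolding E_def oscillator_energy_def
      by (auto intro!: derivative_eq_intros w[OF x] v[OF x] simp: algebra_simps power2_eq_square)
    then have "((\<lambda>x. exp (\<rho> * x) * E x) has_real_derivative
        exp (\<rho> * x) * (\<rho> * E x + (- a * (v x)\<^sup>2 - a * k * (w x)\<^sup>2 + (2 * v x + a * w x) * r x))) (at x)"
      by (auto intro!: derivative_eq_intros simp: algebra_simps)
    moreover have "\<rho> * E x + (- a * (v x)\<^sup>2 - a * k * (w x)\<^sup>2 + (2 * v x + a * w x) * r x) \<le> 0"
      using oscillator_energy_dissipation[OF a k e r[OF x]] unfolding E_def \<rho>_def .
    then have "exp (\<rho> * x) * (\<rho> * E x + (- a * (v x)\<^sup>2 - a * k * (w x)\<^sup>2 + (2 * v x + a * w x) * r x)) \<le> 0"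
      by (simp add: mult_nonneg_nonpos)
    ultimately show "\<exists>D. ((\<lambda>x. exp (\<rho> * x) * E x) has_real_derivative D) (at x) \<and> D \<le> 0"
      by blast
  qed
  text \<open>Going back to the time \<open>s\<close> where \<open>exp (\<rho> * (s - t)) = E t / (2 * B)\<close> contradicts \<open>E s \<le> B\<close>.\<close>
  define s where "s = t + ln (E t / (2 * B)) / \<rho>"
  have "ln (E t / (2 * B)) < 0" using Et E_le[OF t] B by (simp add: field_simps)
  then have st: "s \<le> t" unfolding s_def using \<rho> by (simp add: divide_neg_pos less_imp_le)
  have es: "exp (\<rho> * s) = exp (\<rho> * t) * (E t / (2 * B))"
    unfolding s_def using \<rho> Et B by (simp add: distrib_left exp_add)
  have "exp (\<rho> * t) * E t \<le> exp (\<rho> * s) * E s" using decay[OF st] .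
  also have "\<dots> \<le> exp (\<rho> * s) * B" using E_le[of s] st t by simp
  also have "\<dots> = exp (\<rho> * t) * E t / 2" unfolding es using B by simp
  finally show False using Et by simp
qed

lemma is_sol_derivative_bounded:
  assumes N: "N \<ge> 3" and p: "p > pS N" and sol: "is_sol N p T y y'"
  shows "\<exists>t1 M. t1 < T \<and> (\<forall>t\<le>t1. \<bar>y' t\<bar> \<le> M)"
proof -
  have p1: "p > 1" and m: "mconst N p > 0" and a: "alpha N p > 0"
    using supercritical_constants[OF N p] by auto
  have "(y \<longlongrightarrow> 1) at_bot" using sol unfolding is_sol_def by simp
  then obtain R where R: "\<And>t. t \<le> R \<Longrightarrow> \<bar>y t - 1\<bar> \<le> 1/2"
    using tendsto_at_bot_imp_abs_le[of y 1 "1/2"] by auto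
  obtain R0 where R0: "\<And>t. t \<le> R0 \<Longrightarrow> \<bar>B0 N p t\<bar> \<le> 1"
    using tendsto_at_bot_imp_abs_le[OF B0_tendsto_at_bot[OF m], of 1] by auto
  obtain R1 where R1: "\<And>t. t \<le> R1 \<Longrightarrow> \<bar>B1 N p t\<bar> \<le> 1"
    using tendsto_at_bot_imp_abs_le[OF B1_tendsto_at_bot[OF m], of 1] by auto
  define t1 where "t1 = min (min R (T - 1)) (min R0 R1)"
  define Y where "Y = (3/2::real) powr p"
  have y_near: "0 < y t \<and> y t \<le> 3/2" if "t \<le> t1" for t
  proof -
    have "\<bar>y t - 1\<bar> \<le> 1/2" using R[of t] that unfolding t1_def by simp
    then show ?thesis by arith
  qed
  have nonlin_bound: "\<bar>nonlin N p t (y t)\<bar> \<le> 3 + 2 * Y" if t: "t \<le> t1" for t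
  proof -
    have yp: "0 \<le> y t powr p" "y t powr p \<le> Y"
      unfolding Y_def using y_near[OF t] p1 by (auto intro: powr_mono2)
    have "\<bar>B0 N p t * y t powr p\<bar> \<le> 1 * Y" "\<bar>B1 N p t * y t\<bar> \<le> 1 * (3/2)"
      unfolding abs_mult using R0[of t] R1[of t] t yp y_near[OF t] unfolding t1_def
      by (intro mult_mono; simp)+
    then show ?thesis unfolding nonlin_def using y_near[OF t] yp by (simp only: abs_le_iff) linarith
  qed
  have "\<bar>y' t\<bar> \<le> (3 + 2 * Y) / alpha N p" if "t \<le> t1" for t
  proof (rule bounded_damped_solution_abs_derivative_le[OF a that, where M = "3/2"])
    show "(y has_real_derivative y' x) (at x)" "(y' has_real_derivative
        - alpha N p * y' x + nonlin N p x (y x)) (at x)" if "x \<le> t1" for x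
      using is_solD[OF sol, of x] that unfolding t1_def by auto
    show "\<bar>y x\<bar> \<le> 3/2" if "x \<le> t1" for x using y_near[OF that] by arith
  qed (rule nonlin_bound)
  moreover have "t1 < T" unfolding t1_def by simp
  ultimately show ?thesis by blast
qed

lemma is_sol_unique_near_minus_infinity:
  assumes N: "N \<ge> 3" and p: "p > pS N"
    and sol1: "is_sol N p T1 y1 y1'" and sol2: "is_sol N p T2 y2 y2'"
  shows "\<exists>T'. \<forall>t\<le>T'. y1 t = y2 t"
proof -
  define a where "a = alpha N p"
  define k where "k = p - 1"
  have a: "a > 0" and k: "k > 0" using supercritical_constants[OF N p] unfolding a_def k_def by auto
  define e where "e = min (a / 2) (a * k / (2 * (1 + a)))"
  have e: "e > 0" "e \<le> a / 2" "e * (1 + a) \<le> a * k / 2"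
  proof -
    show "e > 0" unfolding e_def using a k by auto
    show "e \<le> a / 2" unfolding e_def by (rule min.cobounded1)
    have "e * (1 + a) \<le> a * k / (2 * (1 + a)) * (1 + a)"
      unfolding e_def using a by (intro mult_right_mono) auto
    also have "\<dots> = a * k / 2" using a by (simp add: field_simps)
    finally show "e * (1 + a) \<le> a * k / 2" .
  qed
  obtain d T0 where d: "d > 0" and lin: "\<And>t a b. t \<le> T0 \<Longrightarrow> \<bar>a - 1\<bar> \<le> d \<Longrightarrow> \<bar>b - 1\<bar> \<le> d \<Longrightarrow>
      \<bar>nonlin N p t a - nonlin N p t b + (p - 1) * (a - b)\<bar> \<le> e * \<bar>a - b\<bar>"
    using nonlin_linearization[OF N p e(1)] by metis
  have "(y1 \<longlongrightarrow> 1) at_bot" "(y2 \<longlongrightarrow> 1) at_bot" using sol1 sol2 unfolding is_sol_def by simp_all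
  then obtain R1 R2 where R1: "\<And>t. t \<le> R1 \<Longrightarrow> \<bar>y1 t - 1\<bar> \<le> d"
    and R2: "\<And>t. t \<le> R2 \<Longrightarrow> \<bar>y2 t - 1\<bar> \<le> d"
    using tendsto_at_bot_imp_abs_le[OF _ d] by metis
  obtain t1 M1 where t1: "t1 < T1" and M1: "\<And>t. t \<le> t1 \<Longrightarrow> \<bar>y1' t\<bar> \<le> M1"
    using is_sol_derivative_bounded[OF N p sol1] by auto
  obtain t2 M2 where t2: "t2 < T2" and M2: "\<And>t. t \<le> t2 \<Longrightarrow> \<bar>y2' t\<bar> \<le> M2"
    using is_sol_derivative_bounded[OF N p sol2] by auto
  define t0 where "t0 = min (min T0 (min R1 R2)) (min t1 t2)"
  have t0: "t0 \<le> T0" "t0 \<le> R1" "t0 \<le> R2" "t0 \<le> t1" "t0 \<le> t2" "t0 < T1" "t0 < T2"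
    unfolding t0_def using t1 t2 by auto
  define w where "w x = y1 x - y2 x" for x
  define v where "v x = y1' x - y2' x" for x
  define r where "r x = nonlin N p x (y1 x) - nonlin N p x (y2 x) + (p - 1) * w x" for x
  have "w t = 0" if "t \<le> t0" for t
  proof (rule bounded_perturbed_oscillator_vanishes[OF a k _ e(2,3), where w = w and v = v and r = r and M = "2 * d + M1 + M2"])
    show "(w has_real_derivative v x) (at x)" if "x \<le> t0" for x
      unfolding w_def[abs_def] v_def using that t0
      by (auto intro!: derivative_eq_intros is_solD(1)[OF sol1] is_solD(1)[OF sol2])
    show "(v has_real_derivative - a * v x - k * w x + r x) (at x)" if "x \<le> t0" for x
      unfolding v_def[abs_def] using that t0
      by (auto intro!: derivative_eq_intros is_solD(2)[OF sol1] is_solD(2)[OF sol2]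
          simp: a_def k_def r_def w_def algebra_simps)
    show "\<bar>r x\<bar> \<le> e * \<bar>w x\<bar>" if "x \<le> t0" for x
      unfolding r_def w_def using lin R1 R2 that t0 by auto
    show "\<bar>w x\<bar> \<le> 2 * d + M1 + M2 \<and> \<bar>v x\<bar> \<le> 2 * d + M1 + M2" if "x \<le> t0" for x
      using R1[of x] R2[of x] M1[of x] M2[of x] that t0 d unfolding w_def v_def by auto
  qed (use e that in auto)
  then show ?thesis unfolding w_def by auto
qed

lemma has_integral_exp_atMost:
  fixes c t :: real
  assumes c: "c > 0"
  shows "((\<lambda>s. exp (c * s)) has_integral exp (c * t) / c) {..t}"
proof -
  have h: "((\<lambda>x. exp (- c * x)) has_integral exp (c * t) / c) {-t..}"
    using has_integral_exp_minus_to_infinity[OF c, of "-t"] by simp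
  then have "(\<lambda>x. exp (- c * x)) absolutely_integrable_on {-t..}"
    by (intro nonnegative_absolutely_integrable_1) (auto simp: integrable_on_def)
  then have "(\<lambda>s. exp (c * s)) absolutely_integrable_on {..t} \<and>
      integral {..t} (\<lambda>s. exp (c * s)) = exp (c * t) / c"
    using has_absolute_integral_reflect_real[of "{-t..}" "{..t}" "\<lambda>x. exp (c * x)"]
      integral_unique[OF h] by auto
  then show ?thesis using integrable_integral absolutely_integrable_on_def by metis
qed

text \<open>For \<open>Re l < 0\<close> and bounded continuous \<open>h\<close>, \<open>expconv l h\<close> is the solution of
  \<open>u' = l u + h\<close> that stays bounded towards \<open>-\<infinity>\<close> (variation of constants from \<open>-\<infinity>\<close>).\<close>
definition expconv :: "complex \<Rightarrow> (real \<Rightarrow> complex) \<Rightarrow> real \<Rightarrow> complex" where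
  "expconv l h t = exp (l * of_real t) * integral {..t} (\<lambda>s. exp (- (l * of_real s)) * h s)"

lemma expconv_integrable:
  assumes l: "Re l < 0" and h: "continuous_on UNIV h" "\<And>s. norm (h s) \<le> H"
  shows "(\<lambda>s. exp (- (l * of_real s)) * h s) integrable_on {..t}"
proof (rule measurable_bounded_by_integrable_imp_integrable)
  show "(\<lambda>s. exp (- (l * of_real s)) * h s) \<in> borel_measurable (lebesgue_on {..t})"
    by (rule continuous_imp_measurable_on_sets_lebesgue)
      (auto intro!: continuous_intros continuous_on_subset[OF h(1)])
  show "(\<lambda>s. H * exp (- Re l * s)) integrable_on {..t}"
    using integrable_on_cmult_left[OF has_integral_integrable[OF has_integral_exp_atMost], of "- Re l" H t] l
    by simp
  show "norm (exp (- (l * of_real s)) * h s) \<le> H * exp (- Re l * s)" for s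
    using h(2)[of s] by (simp add: norm_mult norm_exp_eq_Re mult.commute mult_right_mono)
qed auto

lemma norm_expconv_le:
  assumes l: "Re l < 0" and h: "continuous_on UNIV h" "\<And>s. norm (h s) \<le> H"
    and bound: "\<And>s. s \<le> t \<Longrightarrow> norm (h s) \<le> H'"
  shows "norm (expconv l h t) \<le> H' / (- Re l)"
proof -
  define c where "c = - Re l"
  have c: "c > 0" using l unfolding c_def by simp
  have "norm (integral {..t} (\<lambda>s. exp (- (l * of_real s)) * h s))
      \<le> integral {..t} (\<lambda>s. H' * exp (c * s))"
  proof (rule integral_norm_bound_integral[OF expconv_integrable[OF l h]])
    show "(\<lambda>s. H' * exp (c * s)) integrable_on {..t}"
      using integrable_on_cmult_left[OF has_integral_integrable[OF has_integral_exp_atMost[OF c]], of H' t]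
      by simp
    show "norm (exp (- (l * of_real s)) * h s) \<le> H' * exp (c * s)" if "s \<in> {..t}" for s
      using bound[of s] that unfolding c_def
      by (simp add: norm_mult norm_exp_eq_Re mult.commute mult_right_mono)
  qed
  also have "\<dots> = H' * (exp (c * t) / c)"
    using integral_unique[OF has_integral_exp_atMost[OF c, of t]] by simp
  finally have "exp (- c * t) * norm (integral {..t} (\<lambda>s. exp (- (l * of_real s)) * h s))
      \<le> exp (- c * t) * (H' * (exp (c * t) / c))" by (intro mult_left_mono) auto
  also have "\<dots> = H' / c" using c by (simp add: exp_minus field_simps)
  finally show ?thesis
    unfolding expconv_def norm_mult c_def by (simp add: norm_exp_eq_Re)
qed

lemma expconv_has_vector_derivative:
  assumes l: "Re l < 0" and h: "continuous_on UNIV h" "\<And>s. norm (h s) \<le> H"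
  shows "(expconv l h has_vector_derivative l * expconv l h t + h t) (at t)"
proof -
  define f where "f = (\<lambda>s. exp (- (l * of_real s)) * h s)"
  define I where "I = (\<lambda>x. integral {..x} f)"
  have f_cont: "continuous_on UNIV f" unfolding f_def by (intro continuous_intros h(1))
  have f_int: "f integrable_on {..x}" for x unfolding f_def by (rule expconv_integrable[OF l h])
  have split: "I x = I (t - 1) + integral {t - 1..x} f" if "t - 1 \<le> x" for x
  proof -
    have "{..x} = {..t - 1} \<union> {t - 1..x}" "{..t - 1} \<inter> {t - 1..x} = {t - 1}" using that by auto
    moreover have "integral ({..t - 1} \<union> {t - 1..x}) f = I (t - 1) + integral {t - 1..x} f"
      unfolding I_def using that
      by (intro integral_Un f_int integrable_on_subinterval[OF f_int[of x]]) auto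
    ultimately show ?thesis unfolding I_def by simp
  qed
  have "((\<lambda>x. integral {t - 1..x} f) has_vector_derivative f t) (at t within {t - 1..t + 1})"
    using f_cont by (intro integral_has_vector_derivative) (auto intro: continuous_on_subset)
  moreover have "at t within {t - 1..t + 1} = at t" by (intro at_within_interior) auto
  ultimately have "((\<lambda>x. integral {t - 1..x} f) has_vector_derivative f t) (at t)" by simp
  then have "((\<lambda>x. I (t - 1) + integral {t - 1..x} f) has_vector_derivative f t) (at t)"
    using has_vector_derivative_add[OF has_vector_derivative_const] by fastforce
  then have dI: "(I has_vector_derivative f t) (at t)"
    by (rule has_vector_derivative_transform_within_open[of _ _ _ "{t - 1<..<t + 1}"])
      (auto intro!: split[symmetric])
  have "((\<lambda>x. exp (l * of_real x)) has_vector_derivative l * exp (l * of_real t)) (at t)"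
    by (rule has_vector_derivative_real_field) (auto intro!: derivative_eq_intros)
  from has_vector_derivative_mult[OF this dI]
  have "((\<lambda>x. exp (l * of_real x) * I x) has_vector_derivative
      exp (l * of_real t) * f t + l * exp (l * of_real t) * I t) (at t)" .
  moreover have "(\<lambda>x. exp (l * of_real x) * I x) = expconv l h"
    by (simp add: fun_eq_iff expconv_def I_def f_def)
  moreover have "exp (l * of_real t) * f t + l * exp (l * of_real t) * I t = l * expconv l h t + h t"
    unfolding f_def I_def expconv_def by (simp add: exp_minus_inverse mult.assoc[symmetric])
  ultimately show ?thesis by simp
qed

lemma continuous_on_expconv:
  assumes "Re l < 0" and "continuous_on UNIV h" "\<And>s. norm (h s) \<le> H"
  shows "continuous_on UNIV (expconv l h)"
  using expconv_has_vector_derivative[OF assms]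
  by (intro continuous_at_imp_continuous_on) (auto intro: has_vector_derivative_continuous)

lemma expconv_diff:
  assumes l: "Re l < 0"
    and h1: "continuous_on UNIV h1" "\<And>s. norm (h1 s) \<le> H1"
    and h2: "continuous_on UNIV h2" "\<And>s. norm (h2 s) \<le> H2"
  shows "expconv l h1 t - expconv l h2 t = expconv l (\<lambda>s. h1 s - h2 s) t"
  unfolding expconv_def right_diff_distrib[symmetric]
    integral_diff[OF expconv_integrable[OF l h1] expconv_integrable[OF l h2], symmetric]
  by (simp add: algebra_simps)

lemma stable_quadratic_factorization:
  fixes a k :: real
  assumes a: "a > 0" and k: "k > 0"
  shows "\<exists>l1 l2 :: complex. l1 + l2 = - of_real a \<and> l1 * l2 = of_real k \<and> Re l1 < 0 \<and> Re l2 < 0"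
proof (cases "a\<^sup>2 - 4 * k \<ge> 0")
  case True
  define D where "D = a\<^sup>2 - 4 * k"
  have D: "D \<ge> 0" "sqrt D * sqrt D = D" using True unfolding D_def by simp_all
  have "sqrt D < sqrt (a\<^sup>2)" unfolding D_def using k by (intro real_sqrt_less_mono) simp
  then have sqrt_D: "sqrt D < a" using a by simp
  have "(- a + sqrt D) / 2 + (- a - sqrt D) / 2 = - a" by (simp add: field_simps)
  then have sum: "complex_of_real ((- a + sqrt D) / 2) + complex_of_real ((- a - sqrt D) / 2) = - of_real a"
    by (metis of_real_add of_real_minus)
  have "(- a + sqrt D) / 2 * ((- a - sqrt D) / 2) = k"
    using D(2) unfolding D_def by (simp add: algebra_simps power2_eq_square)
  then have prod: "complex_of_real ((- a + sqrt D) / 2) * complex_of_real ((- a - sqrt D) / 2) = of_real k"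
    by (metis of_real_mult)
  have "- a - sqrt D < 0" using a real_sqrt_ge_zero[OF D(1)] by linarith
  then have "Re (complex_of_real ((- a + sqrt D) / 2)) < 0" "Re (complex_of_real ((- a - sqrt D) / 2)) < 0"
    using sqrt_D by simp_all
  with sum prod show ?thesis by blast
next
  case False
  define D where "D = 4 * k - a\<^sup>2"
  have D: "sqrt D * sqrt D = D" using False unfolding D_def by simp
  have "Complex (- a / 2) (sqrt D / 2) + Complex (- a / 2) (- sqrt D / 2) = - of_real a"
    by (simp add: complex_eq_iff)
  moreover have "Complex (- a / 2) (sqrt D / 2) * Complex (- a / 2) (- sqrt D / 2) = of_real k"
    using D unfolding D_def by (simp add: complex_eq_iff algebra_simps power2_eq_square) (simp add: field_simps)
  ultimately show ?thesis using a by (intro exI[of _ "Complex (- a / 2) (sqrt D / 2)"] exI) auto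
qed

text \<open>Factoring \<open>D\<^sup>2 + a D + k = (D - l1) (D - l2)\<close>, the bounded solutions of
  \<open>z'' + a z' + k z = F t z\<close> are the fixed points of \<open>z \<mapsto> Re (expconv l2 (expconv l1 (F \<circ> z)))\<close>;
  the Lipschitz constant of \<open>F\<close> makes this map a contraction with factor \<open>1/2\<close> on bounded
  continuous functions.\<close>
locale damped_contraction =
  fixes l1 l2 :: complex and a k :: real and F :: "real \<Rightarrow> real \<Rightarrow> real" and d :: real
  assumes Re_l1: "Re l1 < 0" and Re_l2: "Re l2 < 0"
    and sum_roots: "l1 + l2 = - of_real a" and prod_roots: "l1 * l2 = of_real k"
    and continuous_F: "\<And>f. continuous_on UNIV f \<Longrightarrow> continuous_on UNIV (\<lambda>s. F s (f s))"
    and lipschitz_F: "\<And>s z1 z2. \<bar>F s z1 - F s z2\<bar> \<le> Re l1 * Re l2 / 2 * \<bar>z1 - z2\<bar>"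
    and bounded_F: "\<And>s z. \<bar>F s z\<bar> \<le> d * (Re l1 * Re l2)"
begin

definition source :: "(real \<Rightarrow>\<^sub>C real) \<Rightarrow> real \<Rightarrow> complex" where
  "source f s = complex_of_real (F s (apply_bcontfun f s))"

definition V :: "(real \<Rightarrow>\<^sub>C real) \<Rightarrow> real \<Rightarrow> complex" where
  "V f = expconv l1 (source f)"

definition W :: "(real \<Rightarrow>\<^sub>C real) \<Rightarrow> real \<Rightarrow> complex" where
  "W f = expconv l2 (V f)"

lemma Re_product_pos: "Re l1 * Re l2 > 0"
  using Re_l1 Re_l2 by (simp add: mult_neg_neg)

lemma continuous_on_source: "continuous_on UNIV (source f)"
  unfolding source_def by (intro continuous_intros continuous_F) simp

lemma norm_source_le: "norm (source f s) \<le> d * (Re l1 * Re l2)"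
  unfolding source_def using bounded_F by simp

lemma norm_V_le: "norm (V f t) \<le> d * (Re l1 * Re l2) / (- Re l1)"
  unfolding V_def by (rule norm_expconv_le[OF Re_l1 continuous_on_source norm_source_le norm_source_le])

lemma continuous_on_V: "continuous_on UNIV (V f)"
  unfolding V_def by (rule continuous_on_expconv[OF Re_l1 continuous_on_source norm_source_le])

lemma norm_W_le: "norm (W f t) \<le> d"
proof -
  have "norm (W f t) \<le> d * (Re l1 * Re l2) / (- Re l1) / (- Re l2)"
    unfolding W_def by (rule norm_expconv_le[OF Re_l2 continuous_on_V norm_V_le norm_V_le])
  also have "\<dots> = d" using Re_l1 Re_l2 by simp
  finally show ?thesis .
qed

lemma continuous_on_W: "continuous_on UNIV (W f)"
  unfolding W_def by (rule continuous_on_expconv[OF Re_l2 continuous_on_V norm_V_le])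

lemma Re_W_bcontfun: "(\<lambda>t. Re (W f t)) \<in> bcontfun"
proof (rule bcontfun_normI)
  show "continuous_on UNIV (\<lambda>t. Re (W f t))" using continuous_on_W by (intro continuous_intros)
  show "norm (Re (W f t)) \<le> d" for t using norm_W_le[of f t] abs_Re_le_cmod[of "W f t"] by simp
qed

definition Phi :: "(real \<Rightarrow>\<^sub>C real) \<Rightarrow> (real \<Rightarrow>\<^sub>C real)" where
  "Phi f = Bcontfun (\<lambda>t. Re (W f t))"

lemma Phi_apply: "apply_bcontfun (Phi f) t = Re (W f t)"
  unfolding Phi_def using Bcontfun_inverse[OF Re_W_bcontfun] by simp

lemma dist_Phi_le: "dist (Phi f1) (Phi f2) \<le> 1/2 * dist f1 f2"
proof (rule dist_bound)
  define c where "c = Re l1 * Re l2"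
  have c: "c > 0" unfolding c_def by (rule Re_product_pos)
  have source_diff: "norm (source f1 s - source f2 s) \<le> c / 2 * dist f1 f2" for s
  proof -
    have "norm (source f1 s - source f2 s) = \<bar>F s (apply_bcontfun f1 s) - F s (apply_bcontfun f2 s)\<bar>"
      unfolding source_def by (simp flip: of_real_diff)
    also have "\<dots> \<le> c / 2 * \<bar>apply_bcontfun f1 s - apply_bcontfun f2 s\<bar>"
      using lipschitz_F unfolding c_def by simp
    also have "\<dots> \<le> c / 2 * dist f1 f2"
      using c dist_bounded[of f1 s f2] unfolding dist_real_def by (intro mult_left_mono) auto
    finally show ?thesis .
  qed
  have source_diff_bounded: "norm (source f1 s - source f2 s) \<le> 2 * (d * c)" for s
    using norm_triangle_ineq4[of "source f1 s" "source f2 s"] norm_source_le[of f1 s]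
      norm_source_le[of f2 s] unfolding c_def by simp
  have V_diff: "norm (V f1 t - V f2 t) \<le> c / 2 * dist f1 f2 / (- Re l1)" for t
  proof -
    have "V f1 t - V f2 t = expconv l1 (\<lambda>s. source f1 s - source f2 s) t"
      unfolding V_def
      by (rule expconv_diff[OF Re_l1 continuous_on_source norm_source_le continuous_on_source norm_source_le])
    also have "norm \<dots> \<le> c / 2 * dist f1 f2 / (- Re l1)"
      by (intro norm_expconv_le[OF Re_l1 _ source_diff_bounded source_diff] continuous_intros
          continuous_on_source)
    finally show ?thesis .
  qed
  have V_diff_bounded: "norm (V f1 s - V f2 s) \<le> 2 * (d * c / (- Re l1))" for s
    using norm_triangle_ineq4[of "V f1 s" "V f2 s"] norm_V_le[of f1 s] norm_V_le[of f2 s]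
    unfolding c_def by simp
  fix t
  have "W f1 t - W f2 t = expconv l2 (\<lambda>s. V f1 s - V f2 s) t"
    unfolding W_def by (rule expconv_diff[OF Re_l2 continuous_on_V norm_V_le continuous_on_V norm_V_le])
  also have "norm \<dots> \<le> c / 2 * dist f1 f2 / (- Re l1) / (- Re l2)"
    by (intro norm_expconv_le[OF Re_l2 _ V_diff_bounded V_diff] continuous_intros continuous_on_V)
  also have "\<dots> = 1/2 * dist f1 f2" unfolding c_def using Re_l1 Re_l2 by simp
  finally show "dist (apply_bcontfun (Phi f1) t) (apply_bcontfun (Phi f2) t) \<le> 1/2 * dist f1 f2"
    unfolding Phi_apply dist_real_def using abs_Re_le_cmod[of "W f1 t - W f2 t"] by simp
qed

lemma Phi_fixed_point: "\<exists>z. Phi z = z"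
  using banach_fix_type[of "1/2" Phi] dist_Phi_le by auto

text \<open>With \<open>M = sup |z|\<close> on \<open>(-\<infinity>, t0]\<close>, the fixed point equation gives
  \<open>M \<le> \<eta>/2 + M/2\<close> as soon as \<open>|F s 0| \<le> \<eta> Re l1 Re l2 / 2\<close> on \<open>(-\<infinity>, t0]\<close>.\<close>
lemma fixed_point_eventually_small:
  assumes fixed: "Phi z = z" and F0: "((\<lambda>s. F s 0) \<longlongrightarrow> 0) at_bot" and \<eta>: "\<eta> > 0"
  shows "\<exists>t0. \<forall>t\<le>t0. \<bar>apply_bcontfun z t\<bar> \<le> \<eta>"
proof -
  define c where "c = Re l1 * Re l2"
  have c: "c > 0" unfolding c_def by (rule Re_product_pos)
  have z_W: "apply_bcontfun z t = Re (W z t)" for t using Phi_apply[of z t] fixed by simp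
  have z_bound: "\<bar>apply_bcontfun z t\<bar> \<le> d" for t
    unfolding z_W using norm_W_le[of z t] abs_Re_le_cmod[of "W z t"] by simp
  obtain t0 where t0: "\<And>s. s \<le> t0 \<Longrightarrow> \<bar>F s 0\<bar> \<le> \<eta> * c / 2"
    using tendsto_at_bot_imp_abs_le[OF F0, of "\<eta> * c / 2"] \<eta> c by auto
  define M where "M = (SUP s\<in>{..t0}. \<bar>apply_bcontfun z s\<bar>)"
  have bdd: "bdd_above ((\<lambda>s. \<bar>apply_bcontfun z s\<bar>) ` {..t0})"
    by (rule bdd_aboveI2[where M = d]) (rule z_bound)
  have M_ge: "\<bar>apply_bcontfun z s\<bar> \<le> M" if "s \<le> t0" for s
    unfolding M_def using that bdd by (intro cSUP_upper) auto
  have "\<bar>apply_bcontfun z r\<bar> \<le> \<eta> / 2 + M / 2" if r: "r \<le> t0" for r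
  proof -
    have source_small: "norm (source z s) \<le> \<eta> * c / 2 + c / 2 * M" if s: "s \<le> r" for s
    proof -
      have "norm (source z s) \<le> \<bar>F s 0\<bar> + \<bar>F s (apply_bcontfun z s) - F s 0\<bar>"
        unfolding source_def by simp
      also have "\<dots> \<le> \<eta> * c / 2 + c / 2 * \<bar>apply_bcontfun z s\<bar>"
        using t0[of s] lipschitz_F[of s "apply_bcontfun z s" 0] s r unfolding c_def by simp
      also have "\<dots> \<le> \<eta> * c / 2 + c / 2 * M"
        using M_ge[of s] s r c by simp
      finally show ?thesis .
    qed
    have "norm (V z s) \<le> (\<eta> * c / 2 + c / 2 * M) / (- Re l1)" if "s \<le> r" for s
      unfolding V_def using source_small that
      by (intro norm_expconv_le[OF Re_l1 continuous_on_source norm_source_le]) auto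
    then have "norm (W z r) \<le> (\<eta> * c / 2 + c / 2 * M) / (- Re l1) / (- Re l2)"
      unfolding W_def by (intro norm_expconv_le[OF Re_l2 continuous_on_V norm_V_le]) auto
    also have "\<dots> = \<eta> / 2 + M / 2" unfolding c_def using Re_l1 Re_l2 by (simp add: field_simps)
    finally show ?thesis unfolding z_W using abs_Re_le_cmod[of "W z r"] by linarith
  qed
  then have "M \<le> \<eta> / 2 + M / 2" unfolding M_def by (intro cSUP_least) (auto simp: M_def[symmetric])
  then show ?thesis using M_ge by (intro exI[of _ t0]) force
qed

lemma exists_decaying_solution:
  assumes F0: "((\<lambda>s. F s 0) \<longlongrightarrow> 0) at_bot"
  shows "\<exists>z z'. (\<forall>t. (z has_real_derivative z' t) (at t) \<and>
           (z' has_real_derivative - a * z' t - k * z t + F t (z t)) (at t)) \<and>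
         (\<forall>t. \<bar>z t\<bar> \<le> d) \<and> (z \<longlongrightarrow> 0) at_bot"
proof -
  obtain f where fixed: "Phi f = f" using Phi_fixed_point by blast
  define z where "z t = Re (W f t)" for t
  define z' where "z' t = Re (l2 * W f t + V f t)" for t
  have z_f: "z t = apply_bcontfun f t" for t unfolding z_def using Phi_apply[of f t] fixed by simp
  have dV: "(V f has_vector_derivative l1 * V f t + source f t) (at t)" for t
    unfolding V_def by (rule expconv_has_vector_derivative[OF Re_l1 continuous_on_source norm_source_le])
  have dW: "(W f has_vector_derivative l2 * W f t + V f t) (at t)" for t
    unfolding W_def by (rule expconv_has_vector_derivative[OF Re_l2 continuous_on_V norm_V_le])
  have dRe: "((\<lambda>t. Re (g t)) has_real_derivative Re g') (at t)"
    if "(g has_vector_derivative g') (at t)" for g :: "real \<Rightarrow> complex" and g' t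
    using bounded_linear.has_vector_derivative[OF bounded_linear_Re that]
    by (simp add: has_real_derivative_iff_has_vector_derivative)
  have "l2 * l2 = l2 * (l1 + l2) - l1 * l2" by (simp add: algebra_simps)
  then have l2_sq: "l2 * l2 = - of_real a * l2 - of_real k"
    unfolding sum_roots prod_roots by (simp add: algebra_simps)
  have factored: "l2 * (l2 * W f t + V f t) + (l1 * V f t + source f t)
      = - of_real a * (l2 * W f t + V f t) - of_real k * W f t + source f t" for t
  proof -
    have "l2 * (l2 * W f t + V f t) + (l1 * V f t + source f t)
        = (l2 * l2) * W f t + (l1 + l2) * V f t + source f t" by (simp add: algebra_simps)
    also have "\<dots> = - of_real a * (l2 * W f t + V f t) - of_real k * W f t + source f t"
      unfolding l2_sq sum_roots by (simp add: algebra_simps)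
    finally show ?thesis .
  qed
  have "Re (l2 * (l2 * W f t + V f t) + (l1 * V f t + source f t))
      = - a * z' t - k * z t + F t (z t)" for t
    unfolding factored by (simp add: z'_def z_def source_def z_f[symmetric])
  moreover have "(z' has_real_derivative Re (l2 * (l2 * W f t + V f t) + (l1 * V f t + source f t))) (at t)" for t
    unfolding z'_def by (intro dRe derivative_intros dW dV)
  moreover have "(z has_real_derivative z' t) (at t)" for t
    unfolding z_def[abs_def] z'_def by (intro dRe dW)
  moreover have "\<bar>z t\<bar> \<le> d" for t
    unfolding z_def using norm_W_le[of f t] abs_Re_le_cmod[of "W f t"] by simp
  moreover have "(z \<longlongrightarrow> 0) at_bot"
  proof (rule tendstoI)
    fix \<epsilon> :: real assume "\<epsilon> > 0"
    then obtain t0 where "\<And>t. t \<le> t0 \<Longrightarrow> \<bar>apply_bcontfun f t\<bar> \<le> \<epsilon> / 2"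
      using fixed_point_eventually_small[OF fixed F0, of "\<epsilon> / 2"] by auto
    with \<open>\<epsilon> > 0\<close> show "\<forall>\<^sub>F t in at_bot. dist (z t) 0 < \<epsilon>"
      unfolding eventually_at_bot_linorder z_f dist_real_def by force
  qed
  ultimately show ?thesis by metis
qed

end

definition clip :: "real \<Rightarrow> real \<Rightarrow> real" where
  "clip d z = max (- d) (min d z)"

lemma abs_clip_le: "d \<ge> 0 \<Longrightarrow> \<bar>clip d z\<bar> \<le> d"
  unfolding clip_def by auto

lemma abs_clip_diff_le: "\<bar>clip d z1 - clip d z2\<bar> \<le> \<bar>z1 - z2\<bar>"
  unfolding clip_def by auto

lemma clip_eq: "\<bar>z\<bar> \<le> d \<Longrightarrow> clip d z = z"
  unfolding clip_def by auto

lemma continuous_on_clip: "continuous_on UNIV (clip d)"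
  unfolding clip_def[abs_def] by (intro continuous_intros)

text \<open>The equation for \<open>z = y - 1\<close> reads \<open>z'' + alpha z' + (p - 1) z = nonlin (1 + z) + (p - 1) z\<close>.
  Its right-hand side is frozen at time \<open>T\<close> and truncated to \<open>|z| \<le> d\<close>, which makes it bounded and
  globally Lipschitz without changing it on the region \<open>t \<le> T, |z| \<le> d\<close> where the solution lives.\<close>
definition frozen_nonlin :: "nat \<Rightarrow> real \<Rightarrow> real \<Rightarrow> real \<Rightarrow> real \<Rightarrow> real \<Rightarrow> real" where
  "frozen_nonlin N p d T s z = nonlin N p (min s T) (1 + clip d z) + (p - 1) * clip d z"

lemma frozen_nonlin_eq:
  "s \<le> T \<Longrightarrow> \<bar>z\<bar> \<le> d \<Longrightarrow> frozen_nonlin N p d T s z = nonlin N p s (1 + z) + (p - 1) * z"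
  unfolding frozen_nonlin_def by (simp add: clip_eq)

lemma frozen_nonlin_0: "d \<ge> 0 \<Longrightarrow> frozen_nonlin N p d T s 0 = - (B0 N p (min s T) + B1 N p (min s T))"
  unfolding frozen_nonlin_def by (simp add: clip_eq nonlin_at_1)

lemma continuous_on_frozen_nonlin:
  assumes d: "d < 1" and f: "continuous_on UNIV f"
  shows "continuous_on UNIV (\<lambda>s. frozen_nonlin N p d T s (f s))"
proof -
  have u: "continuous_on UNIV (\<lambda>s. 1 + clip d (f s))"
    by (intro continuous_on_add continuous_on_const continuous_on_compose2[OF continuous_on_clip f]) auto
  have "1 + clip d (f s) \<noteq> 0" for s unfolding clip_def using d by auto
  then have u_powr: "continuous_on UNIV (\<lambda>s. (1 + clip d (f s)) powr p)"
    by (intro continuous_on_powr u continuous_on_const) auto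
  have frozen_time: "continuous_on UNIV (\<lambda>s. B (min s T))"
    if "continuous_on UNIV B" for B :: "real \<Rightarrow> real"
    by (rule continuous_on_compose2[OF that]) (auto intro: continuous_intros)
  have "continuous_on UNIV (\<lambda>s. clip d (f s))"
    by (rule continuous_on_compose2[OF continuous_on_clip f]) auto
  then show ?thesis unfolding frozen_nonlin_def nonlin_def
    by (intro continuous_on_add continuous_on_diff continuous_on_mult u u_powr continuous_on_const
        frozen_time continuous_on_B0 continuous_on_B1)
qed

lemma is_sol_exists:
  assumes N: "N \<ge> 3" and p: "p > pS N"
  shows "\<exists>T y y'. is_sol N p T y y'"
proof -
  define a where "a = alpha N p"
  have a: "a > 0" and p1: "p > 1" and m: "mconst N p > 0"
    using supercritical_constants[OF N p] unfolding a_def by auto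
  obtain l1 l2 where roots: "l1 + l2 = - of_real a" "l1 * l2 = of_real (p - 1)"
    and Re_l: "Re l1 < 0" "Re l2 < 0"
    using stable_quadratic_factorization[OF a, of "p - 1"] p1 by auto
  define c where "c = Re l1 * Re l2"
  have c: "c > 0" unfolding c_def using Re_l by (simp add: mult_neg_neg)
  obtain d T0 where d: "d > 0" "d \<le> 1/2" and lin: "\<And>t a b. t \<le> T0 \<Longrightarrow> \<bar>a - 1\<bar> \<le> d \<Longrightarrow>
      \<bar>b - 1\<bar> \<le> d \<Longrightarrow> \<bar>nonlin N p t a - nonlin N p t b + (p - 1) * (a - b)\<bar> \<le> c / 2 * \<bar>a - b\<bar>"
    using nonlin_linearization[OF N p half_gt_zero[OF c]] by metis
  have B_lim: "((\<lambda>s. B0 N p s + B1 N p s) \<longlongrightarrow> 0) at_bot"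
    using tendsto_add[OF B0_tendsto_at_bot[OF m] B1_tendsto_at_bot[OF m]] by simp
  obtain T1 where T1: "\<And>s. s \<le> T1 \<Longrightarrow> \<bar>B0 N p s + B1 N p s\<bar> \<le> d * c / 2"
    using tendsto_at_bot_imp_abs_le[OF B_lim, of "d * c / 2"] d c by auto
  define T where "T = min T0 T1"
  define F where "F = frozen_nonlin N p d T"
  have F_lip: "\<bar>F s z1 - F s z2\<bar> \<le> c / 2 * \<bar>clip d z1 - clip d z2\<bar>" for s z1 z2
  proof -
    have "min s T \<le> T0" unfolding T_def by simp
    moreover have "\<bar>(1 + clip d z) - 1\<bar> \<le> d" for z using abs_clip_le[of d z] d by simp
    ultimately show ?thesis
      using lin[of "min s T" "1 + clip d z1" "1 + clip d z2"]
      unfolding F_def frozen_nonlin_def by (simp add: algebra_simps)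
  qed
  interpret damped_contraction l1 l2 a "p - 1" F d
  proof
    show "continuous_on UNIV (\<lambda>s. F s (f s))" if "continuous_on UNIV f" for f
      unfolding F_def using continuous_on_frozen_nonlin[OF _ that] d by simp
    show "\<bar>F s z1 - F s z2\<bar> \<le> Re l1 * Re l2 / 2 * \<bar>z1 - z2\<bar>" for s z1 z2
    proof -
      have "c / 2 * \<bar>clip d z1 - clip d z2\<bar> \<le> c / 2 * \<bar>z1 - z2\<bar>"
        using abs_clip_diff_le c by (intro mult_left_mono) auto
      with F_lip[of s z1 z2] show ?thesis unfolding c_def by linarith
    qed
    show "\<bar>F s z\<bar> \<le> d * (Re l1 * Re l2)" for s z
    proof -
      have "\<bar>F s 0\<bar> = \<bar>B0 N p (min s T) + B1 N p (min s T)\<bar>"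
        unfolding F_def frozen_nonlin_0[OF less_imp_le[OF d(1)]] by (rule abs_minus_cancel)
      also have "\<dots> \<le> d * c / 2" using T1[of "min s T"] unfolding T_def by simp
      finally have "\<bar>F s 0\<bar> \<le> d * c / 2" .
      moreover have "\<bar>clip d z - clip d 0\<bar> \<le> d"
        using abs_clip_le[of d z] clip_eq[of 0 d] d by simp
      then have "c / 2 * \<bar>clip d z - clip d 0\<bar> \<le> c / 2 * d" using c by (intro mult_left_mono) auto
      with F_lip[of s z 0] have "\<bar>F s z - F s 0\<bar> \<le> c / 2 * d" by linarith
      ultimately have "\<bar>F s z\<bar> \<le> d * c / 2 + c / 2 * d" by arith
      then show ?thesis unfolding c_def by simp
    qed
  qed (fact Re_l roots)+
  have "\<forall>\<^sub>F s in at_bot. - (B0 N p s + B1 N p s) = F s 0"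
    unfolding eventually_at_bot_linorder F_def using d
    by (intro exI[of _ T]) (simp add: frozen_nonlin_0 min_absorb1)
  moreover have "((\<lambda>s. - (B0 N p s + B1 N p s)) \<longlongrightarrow> 0) at_bot"
    using tendsto_minus[OF B_lim] by simp
  ultimately have F0: "((\<lambda>s. F s 0) \<longlongrightarrow> 0) at_bot"
    by (rule Lim_transform_eventually[rotated])
  obtain z z' where
    z: "\<forall>t. (z has_real_derivative z' t) (at t) \<and>
      (z' has_real_derivative - a * z' t - (p - 1) * z t + F t (z t)) (at t)"
    and z_bound: "\<forall>t. \<bar>z t\<bar> \<le> d" and z_lim: "(z \<longlongrightarrow> 0) at_bot"
    using exists_decaying_solution[OF F0] by blast
  have "is_sol N p T (\<lambda>t. 1 + z t) z'"
    unfolding is_sol_iff_nonlin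
  proof (intro conjI allI impI)
    fix t assume t: "t \<le> T"
    have "F t (z t) = nonlin N p t (1 + z t) + (p - 1) * z t"
      unfolding F_def by (rule frozen_nonlin_eq[OF t z_bound[rule_format]])
    then have rhs: "- a * z' t - (p - 1) * z t + F t (z t) = - alpha N p * z' t + nonlin N p t (1 + z t)"
      unfolding a_def by (simp add: algebra_simps)
    from z have "(z' has_real_derivative - a * z' t - (p - 1) * z t + F t (z t)) (at t)" by blast
    then show "(z' has_real_derivative - alpha N p * z' t + nonlin N p t (1 + z t)) (at t within {..T})"
      unfolding rhs by (rule has_field_derivative_at_within)
    from z have "(z has_real_derivative z' t) (at t)" by blast
    then have "((\<lambda>t. 1 + z t) has_real_derivative z' t) (at t)"
      using DERIV_add[OF DERIV_const] by fastforce
    then show "((\<lambda>t. 1 + z t) has_real_derivative z' t) (at t within {..T})"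
      by (rule has_field_derivative_at_within)
  next
    show "((\<lambda>t. 1 + z t) \<longlongrightarrow> 1) at_bot" using tendsto_add[OF tendsto_const z_lim, of 1] by simp
  qed
  then show ?thesis by blast
qed

theorem lemma4p2:
  fixes N :: nat and p :: real
  assumes "N \<ge> 3" and "p > pS N"
  shows "(\<exists>T y y'. is_sol N p T y y') \<and>
         (\<forall>T1 T2 y1 y1' y2 y2'. is_sol N p T1 y1 y1' \<and> is_sol N p T2 y2 y2' \<longrightarrow>
            (\<exists>T'. \<forall>t\<le>T'. y1 t = y2 t))"
  using is_sol_exists[OF assms] is_sol_unique_near_minus_infinity[OF assms] by blast

end
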